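(* Let $R$ be a tolerance relation on $\{1,\ldots,n\}$, $A(R)$, $T$ as in the context, and let $v\in\mathbb{C}^n$ be a unit vector. Then $T(P_v)$ is the weak density matrix of a pure state of $A(R)$ (i.e. the state $a\mapsto\mathrm{Tr}(T(P_v)a)$ of $A(R)$ is pure) if and only if $v$ is $R$-tolerant. More precisely, the restriction map $F:\mathcal{S}(M_n(\mathbb{C}))\to\mathcal{S}(A(R))$ gives a bijection between the set of $R$-tolerant pure states of $M_n(\mathbb{C})$ and the set of pure states of $A(R)$.
   Context: A tolerance relation on a set is a reflexive and symmetric relation; its graph has an edge between $i\ne j$ whenever $(i,j)\in R$. $T(b)=\sum_{(i,j)\in R}E_{ii}bE_{jj}$ for $b\in M_n(\mathbb{C})$, and $A(R)=T(M_n(\mathbb{C}))$, an operator system whose states are linear functionals $\varphi$ with $\varphi(a)\ge0$ for positive semidefinite $a\in A(R)$ and $\varphi(1)=1$; pure states are extremal states. For a unit vector $v$, $P_v=(v_i\overline{v_j})_{i,j}$ is the orthogonal projection onto $\mathbb{C}v$. For non-zero $v$, $R_v:=\{(i,j)\in R: v_iv_j\ne0\}$, a tolerance relation on $\{i: v_i\neq 0\}$; $v$ is $R$-tolerant if the graph of $R_v$ is connected. A pure state of $M_n(\mathbb{C})$ is $R$-tolerant if its density matrix is $P_v$ for an $R$-tolerant unit vector $v$. $F$ sends a state of $M_n(\mathbb{C})$ to its restriction to $A(R)$. *)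

theory Defs
  imports "HOL-Analysis.Analysis" "HOL-Library.Complex_Order"
begin

text \<open>Index set {1..n} is modelled by a finite type 'n; matrices in M_n(C) are
  complex^'n^'n with entries a$i$j; vectors in C^n are complex^'n.\<close>

definition matunit :: "'n::finite \<Rightarrow> 'n \<Rightarrow> complex^'n^'n" where
  "matunit k l = (\<chi> i j. if i = k \<and> j = l then 1 else 0)"

definition Tmap :: "('n::finite \<times> 'n) set \<Rightarrow> complex^'n^'n \<Rightarrow> complex^'n^'n" where
  "Tmap R b = (\<Sum>(i,j)\<in>R. matunit i i ** b ** matunit j j)"

definition AR :: "('n::finite \<times> 'n) set \<Rightarrow> (complex^'n^'n) set" where
  "AR R = range (Tmap R)"

definition tolerance :: "('n \<times> 'n) set \<Rightarrow> bool" where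
  "tolerance R \<longleftrightarrow> refl R \<and> sym R"

definition Pv :: "complex^'n \<Rightarrow> complex^'n^'n" where
  "Pv v = (\<chi> i j. v$i * cnj (v$j))"

definition Rv :: "('n \<times> 'n) set \<Rightarrow> complex^'n \<Rightarrow> ('n \<times> 'n) set" where
  "Rv R v = {(i,j) \<in> R. v$i * v$j \<noteq> 0}"

definition R_tolerant :: "('n \<times> 'n) set \<Rightarrow> complex^'n \<Rightarrow> bool" where
  "R_tolerant R v \<longleftrightarrow> v \<noteq> 0 \<and>
     (\<forall>i j. v$i \<noteq> 0 \<longrightarrow> v$j \<noteq> 0 \<longrightarrow> (i,j) \<in> (Rv R v)\<^sup>*)"

text \<open>positive semidefinite (complex order: 0 \<le> z iff z is real and nonnegative)\<close>
definition psd :: "complex^'n::finite^'n \<Rightarrow> bool" where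
  "psd a \<longleftrightarrow> (\<forall>x::complex^'n. 0 \<le> (\<Sum>i\<in>UNIV. \<Sum>j\<in>UNIV. cnj (x$i) * a$i$j * x$j))"

definition msmult :: "complex \<Rightarrow> complex^'n^'n \<Rightarrow> complex^'n^'n" where
  "msmult c a = (\<chi> i j. c * a$i$j)"

text \<open>Functionals on a subspace S of M_n are represented extensionally:
  functions that vanish outside S.\<close>
definition lin_on :: "(complex^'n^'n) set \<Rightarrow> (complex^'n^'n \<Rightarrow> complex) \<Rightarrow> bool" where
  "lin_on S \<phi> \<longleftrightarrow> (\<forall>a\<in>S. \<forall>b\<in>S. \<phi> (a + b) = \<phi> a + \<phi> b) \<and>
                   (\<forall>c. \<forall>a\<in>S. \<phi> (msmult c a) = c * \<phi> a)"

definition state_of :: "(complex^'n::finite^'n) set \<Rightarrow> (complex^'n^'n \<Rightarrow> complex) \<Rightarrow> bool" where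
  "state_of S \<phi> \<longleftrightarrow> lin_on S \<phi> \<and> (\<forall>a\<in>S. psd a \<longrightarrow> 0 \<le> \<phi> a) \<and>
       \<phi> (mat 1) = 1 \<and> (\<forall>a. a \<notin> S \<longrightarrow> \<phi> a = 0)"

definition pure_state_of :: "(complex^'n::finite^'n) set \<Rightarrow> (complex^'n^'n \<Rightarrow> complex) \<Rightarrow> bool" where
  "pure_state_of S \<phi> \<longleftrightarrow> state_of S \<phi> \<and>
     (\<forall>\<psi>1 \<psi>2 (t::real). state_of S \<psi>1 \<and> state_of S \<psi>2 \<and> 0 < t \<and> t < 1 \<and>
        \<phi> = (\<lambda>a. of_real t * \<psi>1 a + of_real (1 - t) * \<psi>2 a) \<longrightarrow> \<psi>1 = \<phi> \<and> \<psi>2 = \<phi>)"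

definition restr_to :: "(complex^'n^'n) set \<Rightarrow> (complex^'n^'n \<Rightarrow> complex) \<Rightarrow> (complex^'n^'n \<Rightarrow> complex)" where
  "restr_to S \<phi> = (\<lambda>a. if a \<in> S then \<phi> a else 0)"

definition R_tolerant_pure_state :: "('n::finite \<times> 'n) set \<Rightarrow> (complex^'n^'n \<Rightarrow> complex) \<Rightarrow> bool" where
  "R_tolerant_pure_state R \<phi> \<longleftrightarrow> pure_state_of UNIV \<phi> \<and>
     (\<exists>v. norm v = 1 \<and> R_tolerant R v \<and> (\<forall>a. \<phi> a = trace (Pv v ** a)))"

end

theory Submission
  imports Defs
begin

text \<open>A state of A(R) is determined by its density on the entries in R. Every state of A(R)
  extends to a state of M_n (Hahn-Banach), so a pure state of A(R) is the restriction of a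
  vector state P_u. If v is not R-tolerant, A(R) has no entries across a connected component C
  of the graph of R_v, so the restriction of P_v is a proper convex combination of the
  restrictions of the normalised pieces of v on C and off C. If v is R-tolerant and a state
  \<psi> is dominated by a multiple of the restriction of P_v, a density \<rho> of \<psi> vanishes off the
  support of v and annihilates the vector of span {e_i, e_j} orthogonal to v for every edge
  (i, j); so \<rho>_ij = c_i v_i conj v_j with c_i = c_j along edges, connectedness makes c constant
  and the trace makes it 1. The same propagation along edges shows that the R-entries of P_v
  determine P_v, which gives injectivity.\<close>

definition sesq :: "complex^'n::finite^'n \<Rightarrow> complex^'n \<Rightarrow> complex^'n \<Rightarrow> complex" where
  "sesq a x y = (\<Sum>i\<in>UNIV. \<Sum>j\<in>UNIV. cnj (x$i) * a$i$j * y$j)"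

definition cinner :: "complex^'n::finite \<Rightarrow> complex^'n \<Rightarrow> complex" where
  "cinner w x = (\<Sum>i\<in>UNIV. cnj (w$i) * x$i)"

lemma psd_iff_sesq: "psd a \<longleftrightarrow> (\<forall>x. 0 \<le> sesq a x x)"
  by (simp add: psd_def sesq_def)

lemma cnj_mult_self: "cnj z * z = of_real (cmod z ^ 2)"
  by (metis complex_norm_square mult.commute of_real_power)

lemma norm_vec_power2: "norm (u::complex^'n::finite) ^ 2 = (\<Sum>i\<in>UNIV. cmod (u$i) ^ 2)"
  unfolding norm_vec_def L2_set_def by (simp add: sum_nonneg)

lemma trace_matrix_mult: "trace (X ** Y) = (\<Sum>i\<in>UNIV. \<Sum>j\<in>UNIV. X$i$j * Y$j$i)"
  by (simp add: trace_def matrix_matrix_mult_def)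

lemma Pv_nth: "Pv x $ i $ j = x$i * cnj (x$j)"
  by (simp add: Pv_def)

lemma trace_Pv_mult: "trace (Pv v ** a) = sesq a v v"
proof -
  have "trace (Pv v ** a) = (\<Sum>i\<in>UNIV. \<Sum>j\<in>UNIV. v$i * cnj (v$j) * a$j$i)"
    by (simp add: trace_matrix_mult Pv_nth)
  also have "\<dots> = (\<Sum>j\<in>UNIV. \<Sum>i\<in>UNIV. v$i * cnj (v$j) * a$j$i)"
    by (rule sum.swap)
  finally show ?thesis
    by (simp add: sesq_def mult_ac)
qed

lemma trace_Pv: "trace (Pv u) = of_real (norm u ^ 2)"
  using cnj_mult_self by (simp add: trace_def Pv_nth norm_vec_power2 mult.commute)

lemma sesq_add_left: "sesq a (x + y) z = sesq a x z + sesq a y z"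
  by (simp add: sesq_def algebra_simps sum.distrib)

lemma sesq_add_right: "sesq a z (x + y) = sesq a z x + sesq a z y"
  by (simp add: sesq_def algebra_simps sum.distrib)

lemma sesq_scale_left: "sesq a (c *s x) y = cnj c * sesq a x y"
  by (simp add: sesq_def algebra_simps sum_distrib_left)

lemma sesq_scale_right: "sesq a x (c *s y) = c * sesq a x y"
  by (simp add: sesq_def algebra_simps sum_distrib_left)

lemma sesq_diff_right: "sesq a z (x - y) = sesq a z x - sesq a z y"
  by (simp add: sesq_def algebra_simps sum_subtractf)

lemma sesq_matrix_add: "sesq (a + b) x y = sesq a x y + sesq b x y"
  by (simp add: sesq_def algebra_simps sum.distrib)

lemma sesq_matrix_diff: "sesq (a - b) x y = sesq a x y - sesq b x y"
  by (simp add: sesq_def algebra_simps sum_subtractf)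

lemma sesq_msmult: "sesq (msmult c a) x y = c * sesq a x y"
  by (simp add: sesq_def msmult_def sum_distrib_left mult_ac)

lemma scaleR_matrix_nth: "(c *\<^sub>R A) $ i $ j = of_real c * A$i$j"
  by (metis vector_scaleR_component scaleR_conv_of_real)

lemma sesq_matrix_scaleR: "sesq (c *\<^sub>R a) x y = of_real c * sesq a x y"
  unfolding sesq_def scaleR_matrix_nth by (simp add: sum_distrib_left mult_ac)

lemma sesq_mat1: "sesq (mat 1) x x = of_real (norm x ^ 2)"
proof -
  have "sesq (mat 1) x x = (\<Sum>i\<in>UNIV. \<Sum>j\<in>UNIV. if j = i then cnj (x$i) * x$j else 0)"
    unfolding sesq_def by (intro sum.cong) (auto simp: mat_def)
  then show ?thesis
    by (simp add: cnj_mult_self norm_vec_power2)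
qed

lemma sesq_axis_left: "sesq a (axis i 1) y = (\<Sum>j\<in>UNIV. a$i$j * y$j)"
proof -
  have "sesq a (axis i 1) y = (\<Sum>k\<in>UNIV. if k = i then (\<Sum>j\<in>UNIV. a$k$j * y$j) else 0)"
    unfolding sesq_def by (rule sum.cong) (auto simp: axis_def)
  then show ?thesis by simp
qed

lemma sesq_axis: "sesq a (axis i 1) (axis j 1) = a$i$j"
proof -
  have "sesq a (axis i 1) (axis j 1) = (\<Sum>k\<in>UNIV. if k = j then a$i$k else 0)"
    unfolding sesq_axis_left by (rule sum.cong) (auto simp: axis_def)
  then show ?thesis by simp
qed

lemma sesq_Pv: "sesq (Pv w) x y = cnj (cinner w x) * cinner w y"
proof -
  have "sesq (Pv w) x y = (\<Sum>i\<in>UNIV. \<Sum>j\<in>UNIV. (cnj (x$i) * w$i) * (cnj (w$j) * y$j))"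
    by (simp add: sesq_def Pv_nth mult_ac)
  also have "\<dots> = (\<Sum>i\<in>UNIV. cnj (x$i) * w$i) * (\<Sum>j\<in>UNIV. cnj (w$j) * y$j)"
    by (simp add: sum_product)
  finally show ?thesis
    by (simp add: cinner_def mult_ac)
qed

lemma sesq_normalize:
  assumes "w \<noteq> 0"
  obtains u where "norm u = 1" "w = of_real (norm w) *s u"
    "\<And>a. sesq a w w = of_real (norm w ^ 2) * sesq a u u"
proof
  define u where "u = of_real (1 / norm w) *s w"
  have "u = (1 / norm w) *\<^sub>R w"
    by (simp add: u_def vec_eq_iff scaleR_conv_of_real[where 'a = complex])
  then show "norm u = 1"
    using assms by simp
  show w: "w = of_real (norm w) *s u"
    using assms by (simp add: u_def vec_eq_iff)
  show "sesq a w w = of_real (norm w ^ 2) * sesq a u u" for a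
    by (subst (1 2) w) (simp add: sesq_scale_left sesq_scale_right power2_eq_square)
qed

subsection \<open>Positive semidefinite matrices\<close>

lemma psd_Pv: "psd (Pv w)"
  unfolding psd_iff_sesq sesq_Pv cnj_mult_self by (simp add: less_eq_complex_def)

lemma psd_sesq_real: "psd a \<Longrightarrow> sesq a x x = of_real (Re (sesq a x x)) \<and> 0 \<le> Re (sesq a x x)"
  unfolding psd_iff_sesq by (simp add: less_eq_complex_def complex_eq_iff)

lemma psd_of_unit_vectors:
  assumes "\<And>y. norm y = 1 \<Longrightarrow> 0 \<le> sesq a y y"
  shows "psd a"
  unfolding psd_iff_sesq
proof
  fix x :: "complex^_"
  show "0 \<le> sesq a x x"
  proof (cases "x = 0")
    case False
    then obtain u where "norm u = 1" "sesq a x x = of_real (norm x ^ 2) * sesq a u u"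
      using sesq_normalize by metis
    then show ?thesis
      using assms by (simp add: less_eq_complex_def)
  qed (simp add: sesq_def)
qed

lemma psd_sesq_hermitian:
  assumes "psd a"
  shows "sesq a y x = cnj (sesq a x y)"
proof -
  have real: "Im (sesq a z z) = 0" for z
    using assms unfolding psd_iff_sesq by (simp add: less_eq_complex_def)
  have "sesq a (x + y) (x + y) = sesq a x x + sesq a x y + sesq a y x + sesq a y y"
    by (simp add: sesq_add_left sesq_add_right)
  then have "Im (sesq a x y + sesq a y x) = 0"
    using real[of "x + y"] real[of x] real[of y] by simp
  moreover have "sesq a (x + \<i> *s y) (x + \<i> *s y)
      = sesq a x x + \<i> * sesq a x y - \<i> * sesq a y x + sesq a y y"
    by (simp add: sesq_add_left sesq_add_right sesq_scale_left sesq_scale_right algebra_simps)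
  then have "Re (sesq a x y - sesq a y x) = 0"
    using real[of "x + \<i> *s y"] real[of x] real[of y] by simp
  ultimately show ?thesis
    by (simp add: complex_eq_iff)
qed

lemma psd_hermitian: "psd a \<Longrightarrow> a$j$i = cnj (a$i$j)"
  using psd_sesq_hermitian[of a "axis i 1" "axis j 1"] by (simp add: sesq_axis)

lemma psd_diag_nonneg: "psd a \<Longrightarrow> 0 \<le> a$i$i"
  using sesq_axis[of a i i] unfolding psd_iff_sesq by metis

lemma psd_diag_real: "psd a \<Longrightarrow> a$i$i = of_real (Re (a$i$i))"
  using psd_sesq_real[of a "axis i 1"] by (simp add: sesq_axis)

lemma psd_diag_pos: "psd a \<Longrightarrow> a$i$i \<noteq> 0 \<Longrightarrow> 0 < Re (a$i$i)"
  using psd_diag_nonneg[of a i] by (auto simp: less_eq_complex_def complex_eq_iff)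

lemma psd_quadratic_nonneg:
  assumes "psd a"
  shows "0 \<le> Re (sesq a x x) * cmod \<alpha> ^ 2 + Re (sesq a y y) * cmod \<beta> ^ 2 + 2 * Re (cnj \<alpha> * \<beta> * sesq a x y)"
proof -
  have "sesq a (\<alpha> *s x + \<beta> *s y) (\<alpha> *s x + \<beta> *s y)
      = cnj \<alpha> * \<alpha> * sesq a x x + cnj \<beta> * \<beta> * sesq a y y
        + cnj \<alpha> * \<beta> * sesq a x y + cnj (cnj \<alpha> * \<beta> * sesq a x y)"
    by (simp add: sesq_add_left sesq_add_right sesq_scale_left sesq_scale_right
        psd_sesq_hermitian[OF assms, of y x] algebra_simps)
  also have "Re \<dots> = Re (sesq a x x) * cmod \<alpha> ^ 2 + Re (sesq a y y) * cmod \<beta> ^ 2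
      + 2 * Re (cnj \<alpha> * \<beta> * sesq a x y)"
    using psd_sesq_real[OF assms, of x] psd_sesq_real[OF assms, of y]
    by (simp add: cnj_mult_self del: complex_cnj_mult)
  finally show ?thesis
    using psd_sesq_real[OF assms] by metis
qed

lemma psd_cauchy_schwarz:
  assumes "psd a"
  shows "cmod (sesq a x y) ^ 2 \<le> Re (sesq a x x) * Re (sesq a y y)"
proof -
  define A D C where "A = Re (sesq a x x)" and "D = Re (sesq a y y)" and "C = sesq a x y"
  have quad: "0 \<le> A * cmod \<alpha> ^ 2 + D * cmod \<beta> ^ 2 + 2 * Re (cnj \<alpha> * \<beta> * C)" for \<alpha> \<beta>
    using psd_quadratic_nonneg[OF assms] by (simp add: A_def D_def C_def)
  show ?thesis
  proof (cases "D = 0")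
    case False
    \<comment> \<open>\<alpha> = D, \<beta> = -cnj C gives D (A D - |C|^2) \<ge> 0\<close>
    have "0 \<le> D * (A * D - cmod C ^ 2)"
      using quad[of "of_real D" "- cnj C"]
      by (simp add: cmod_power2[unfolded power2_eq_square] algebra_simps power2_eq_square)
    moreover have "0 \<le> D"
      using psd_sesq_real[OF assms] by (simp add: D_def)
    ultimately show ?thesis
      using False by (simp add: A_def D_def C_def zero_le_mult_iff)
  next
    case True
    \<comment> \<open>then A - 2 r |C|^2 \<ge> 0 for every real r, forcing C = 0\<close>
    have "cmod C = 0"
    proof (rule ccontr)
      assume "cmod C \<noteq> 0"
      then have "cmod C ^ 2 > 0" by simp
      moreover have "0 \<le> A - 2 * ((\<bar>A\<bar> + 1) / (2 * cmod C ^ 2)) * cmod C ^ 2"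
        using quad[of 1 "- of_real ((\<bar>A\<bar> + 1) / (2 * cmod C ^ 2)) * cnj C"] True
        by (simp add: cmod_power2[unfolded power2_eq_square] algebra_simps power2_eq_square)
      ultimately show False by simp
    qed
    then show ?thesis
      using True by (simp add: C_def D_def)
  qed
qed

lemma psd_sesq_null: "psd a \<Longrightarrow> sesq a x x = 0 \<Longrightarrow> sesq a y x = 0"
  using psd_cauchy_schwarz[of a y x] by simp

lemma psd_entry_cauchy_schwarz: "psd a \<Longrightarrow> cmod (a$i$j) ^ 2 \<le> Re (a$i$i) * Re (a$j$j)"
  using psd_cauchy_schwarz[of a "axis i 1" "axis j 1"] by (simp add: sesq_axis)

lemma psd_offdiag_zero: "psd a \<Longrightarrow> a$i$i = 0 \<or> a$j$j = 0 \<Longrightarrow> a$i$j = 0"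
  using psd_entry_cauchy_schwarz[of a i j] by auto

lemma psd_add: "psd a \<Longrightarrow> psd b \<Longrightarrow> psd (a + b)"
  unfolding psd_iff_sesq sesq_matrix_add by (simp add: add_nonneg_nonneg)

lemma psd_scaleR: "psd a \<Longrightarrow> 0 \<le> c \<Longrightarrow> psd (c *\<^sub>R a)"
  unfolding psd_iff_sesq sesq_matrix_scaleR by (simp add: less_eq_complex_def)

lemma psd_zero: "psd 0"
  by (simp add: psd_iff_sesq sesq_def)

lemma psd_sum_list: "(\<And>u. u \<in> set us \<Longrightarrow> psd (f u)) \<Longrightarrow> psd (sum_list (map f us))"
  by (induction us) (auto intro: psd_add psd_zero)

lemma psd_mat1: "psd (mat 1)"
  unfolding psd_iff_sesq sesq_mat1 by (simp add: less_eq_complex_def)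

lemma psd_trace_zero:
  assumes p: "psd \<rho>" and tr: "trace \<rho> = 0"
  shows "\<rho> = 0"
proof -
  have d0: "0 \<le> Re (\<rho>$k$k)" "Im (\<rho>$k$k) = 0" for k
    using psd_diag_nonneg[OF p, of k] by (auto simp: less_eq_complex_def)
  have "(\<Sum>k\<in>UNIV. Re (\<rho>$k$k)) = 0"
    using arg_cong[OF tr, of Re] by (simp add: trace_def Re_sum)
  then have "\<forall>k\<in>UNIV. Re (\<rho>$k$k) = 0"
    using d0(1) by (subst sum_nonneg_eq_0_iff[symmetric]) auto
  then have "\<rho>$k$k = 0" for k
    using d0(2) by (simp add: complex_eq_iff)
  then have "\<rho>$i$j = 0" for i j
    using psd_offdiag_zero[OF p] by blast
  then show ?thesis
    by (simp add: vec_eq_iff)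
qed

text \<open>Subtracting Pv (pivot \<rho> k) from \<rho> is a Schur complement step: it keeps positivity, kills
  the k-th diagonal entry and creates no new nonzero ones. Iterating writes \<rho> as a sum of
  rank-one projections.\<close>

definition pivot :: "complex^'n::finite^'n \<Rightarrow> 'n \<Rightarrow> complex^'n" where
  "pivot \<rho> k = (\<chi> i. \<rho>$i$k / of_real (sqrt (Re (\<rho>$k$k))))"

lemma pivot_nonzero: "psd \<rho> \<Longrightarrow> \<rho>$k$k \<noteq> 0 \<Longrightarrow> pivot \<rho> k \<noteq> 0"
  by (auto simp: pivot_def vec_eq_iff dest: psd_diag_pos)

lemma psd_minus_Pv_pivot:
  assumes p: "psd \<rho>" and k: "\<rho>$k$k \<noteq> 0"
  shows "psd (\<rho> - Pv (pivot \<rho> k))"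
  unfolding psd_iff_sesq
proof
  fix x
  define d where "d = Re (\<rho>$k$k)"
  have "d > 0"
    using psd_diag_pos[OF p k] by (simp add: d_def)
  have "cinner (pivot \<rho> k) x = sesq \<rho> (axis k 1) x / of_real (sqrt d)"
    unfolding cinner_def pivot_def d_def[symmetric]
    by (simp add: psd_hermitian[OF p, of k] sesq_axis_left sum_divide_distrib mult.commute)
  then have "cmod (cinner (pivot \<rho> k) x) ^ 2 = cmod (sesq \<rho> (axis k 1) x) ^ 2 / d"
    using \<open>d > 0\<close> by (simp add: norm_divide power_divide)
  also have "\<dots> \<le> Re (sesq \<rho> x x)"
    using psd_cauchy_schwarz[OF p, of "axis k 1" x] \<open>d > 0\<close>
    by (simp add: sesq_axis d_def divide_le_eq mult.commute)
  finally have "cmod (cinner (pivot \<rho> k) x) ^ 2 \<le> Re (sesq \<rho> x x)" .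
  moreover have "sesq (\<rho> - Pv (pivot \<rho> k)) x x = of_real (Re (sesq \<rho> x x) - cmod (cinner (pivot \<rho> k) x) ^ 2)"
    unfolding sesq_matrix_diff sesq_Pv cnj_mult_self using psd_sesq_real[OF p, of x] by simp
  ultimately show "0 \<le> sesq (\<rho> - Pv (pivot \<rho> k)) x x"
    by (simp add: less_eq_complex_def)
qed

lemma diag_minus_Pv_pivot:
  assumes p: "psd \<rho>" and k: "\<rho>$k$k \<noteq> 0" and l: "(\<rho> - Pv (pivot \<rho> k))$l$l \<noteq> 0"
  shows "\<rho>$l$l \<noteq> 0" and "l \<noteq> k"
proof -
  define d where "d = Re (\<rho>$k$k)"
  have "d > 0" and rk: "\<rho>$k$k = of_real d"
    using psd_diag_pos[OF p k] psd_diag_real[OF p, of k] by (simp_all add: d_def)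
  have "(of_real (sqrt d)::complex) ^ 2 = of_real d"
    using \<open>d > 0\<close> by (metis of_real_power real_sqrt_pow2 less_imp_le)
  then have e: "(\<rho> - Pv (pivot \<rho> k))$l$l = \<rho>$l$l - \<rho>$l$k * cnj (\<rho>$l$k) / of_real d"
    using \<open>d > 0\<close>
    by (simp add: pivot_def d_def[symmetric] Pv_nth field_simps power2_eq_square[symmetric])
  show "\<rho>$l$l \<noteq> 0"
    using l e psd_offdiag_zero[OF p, of l k] by auto
  show "l \<noteq> k"
    using l e rk \<open>d > 0\<close> by auto
qed

lemma psd_eq_sum_Pv:
  assumes "psd \<rho>"
  obtains us where "\<rho> = sum_list (map Pv us)" "\<forall>u\<in>set us. u \<noteq> (0::complex^'n::finite)"
  using assms
proof (induction "card {l. \<rho>$l$l \<noteq> 0}" arbitrary: \<rho> thesis rule: less_induct)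
  case less
  show ?case
  proof (cases "\<exists>k. \<rho>$k$k \<noteq> 0")
    case False
    then have "\<rho>$i$j = 0" for i j
      using psd_offdiag_zero[OF less.prems(2)] by blast
    then have "\<rho> = 0"
      by (simp add: vec_eq_iff)
    then show ?thesis
      using less.prems(1)[of "[]"] by simp
  next
    case True
    then obtain k where k: "\<rho>$k$k \<noteq> 0" by blast
    have "{l. (\<rho> - Pv (pivot \<rho> k))$l$l \<noteq> 0} \<subset> {l. \<rho>$l$l \<noteq> 0}"
      using diag_minus_Pv_pivot[OF less.prems(2) k] k by blast
    then have "card {l. (\<rho> - Pv (pivot \<rho> k))$l$l \<noteq> 0} < card {l. \<rho>$l$l \<noteq> 0}"
      by (simp add: psubset_card_mono)
    then obtain us where "\<rho> - Pv (pivot \<rho> k) = sum_list (map Pv us)" "\<forall>u\<in>set us. u \<noteq> 0"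
      using less.hyps psd_minus_Pv_pivot[OF less.prems(2) k] by blast
    then show ?thesis
      using less.prems(1)[of "pivot \<rho> k # us"] pivot_nonzero[OF less.prems(2) k]
      by (simp add: diff_eq_eq add.commute)
  qed
qed

lemma trace_add_mult: "trace ((X + Y) ** a) = trace (X ** a) + trace (Y ** a)"
  by (simp add: trace_matrix_mult algebra_simps sum.distrib)

lemma trace_mult_psd_nonneg:
  assumes "psd \<rho>" "psd a"
  shows "0 \<le> trace (\<rho> ** a)"
proof -
  obtain us where us: "\<rho> = sum_list (map Pv us)"
    using psd_eq_sum_Pv[OF assms(1)] by blast
  have "trace (\<rho> ** a) = (\<Sum>u\<leftarrow>us. sesq a u u)"
    unfolding us by (induction us) (simp_all add: trace_add_mult trace_Pv_mult, simp add: trace_def)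
  also have "0 \<le> \<dots>"
    using assms(2) unfolding psd_iff_sesq by (induction us) (auto intro: add_nonneg_nonneg)
  finally show ?thesis .
qed

subsection \<open>The operator system A(R)\<close>

lemma matunit_nth: "matunit k l $ i $ j = (if i = k \<and> j = l then 1 else 0)"
  by (simp add: matunit_def)

lemma matunit_sandwich_nth:
  "(matunit p p ** b ** matunit q q) $ i $ j = (if i = p \<and> j = q then b$p$q else 0)"
proof -
  have left: "(matunit p p ** b) $ i $ k = (if i = p then b$p$k else 0)" for k
  proof -
    have "(matunit p p ** b) $ i $ k = (\<Sum>m\<in>UNIV. matunit p p $ i $ m * b $ m $ k)"
      by (simp add: matrix_matrix_mult_def)
    also have "\<dots> = (\<Sum>m\<in>UNIV. if m = p then (if i = p then b$m$k else 0) else 0)"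
      by (intro sum.cong) (auto simp: matunit_nth)
    finally show ?thesis by simp
  qed
  have "(matunit p p ** b ** matunit q q) $ i $ j = (\<Sum>k\<in>UNIV. (matunit p p ** b) $ i $ k * matunit q q $ k $ j)"
    by (simp add: matrix_matrix_mult_def)
  also have "\<dots> = (\<Sum>k\<in>UNIV. if k = q then (if i = p \<and> j = q then b$p$k else 0) else 0)"
    by (intro sum.cong) (auto simp: matunit_nth left)
  finally show ?thesis by simp
qed

lemma Tmap_nth: "Tmap R b $ i $ j = (if (i,j) \<in> R then b$i$j else 0)"
proof -
  have "Tmap R b $ i $ j = (\<Sum>p\<in>R. if p = (i,j) then b$i$j else 0)"
    unfolding Tmap_def sum_component
    by (rule sum.cong) (auto simp: matunit_sandwich_nth split: if_splits)
  then show ?thesis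
    by (simp add: sum.delta')
qed

lemma AR_iff: "a \<in> AR R \<longleftrightarrow> (\<forall>i j. (i,j) \<notin> R \<longrightarrow> a$i$j = 0)"
proof
  assume "a \<in> AR R"
  then show "\<forall>i j. (i,j) \<notin> R \<longrightarrow> a$i$j = 0"
    by (auto simp: AR_def Tmap_nth)
next
  assume "\<forall>i j. (i,j) \<notin> R \<longrightarrow> a$i$j = 0"
  then have "Tmap R a = a"
    by (auto simp: vec_eq_iff Tmap_nth)
  then show "a \<in> AR R"
    unfolding AR_def by (metis rangeI)
qed

lemma Tmap_AR: "a \<in> AR R \<Longrightarrow> Tmap R a = a"
  by (auto simp: AR_iff vec_eq_iff Tmap_nth)

lemma AR_UNIV: "AR UNIV = UNIV"
  by (auto simp: AR_iff)

lemma AR_zero: "0 \<in> AR R"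
  by (simp add: AR_iff)

lemma AR_add: "a \<in> AR R \<Longrightarrow> b \<in> AR R \<Longrightarrow> a + b \<in> AR R"
  by (simp add: AR_iff)

lemma AR_msmult: "a \<in> AR R \<Longrightarrow> msmult c a \<in> AR R"
  by (simp add: AR_iff msmult_def)

lemma AR_matunit: "(i,j) \<in> R \<Longrightarrow> matunit i j \<in> AR R"
  by (auto simp: AR_iff matunit_nth)

lemma AR_mat1: "refl R \<Longrightarrow> mat 1 \<in> AR R"
  by (auto simp: AR_iff mat_def refl_on_def)

lemma Pv_AR_if_supported_on_edge:
  assumes "tolerance R" and "(i,j) \<in> R" and "\<And>k. k \<notin> {i,j} \<Longrightarrow> x$k = 0"
  shows "Pv x \<in> AR R"
proof -
  have "(p,q) \<in> R" if "p \<in> {i,j}" "q \<in> {i,j}" for p q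
    using assms(1,2) that by (auto simp: tolerance_def refl_on_def sym_def)
  then show ?thesis
    using assms(3) by (auto simp: AR_iff Pv_nth)
qed

lemma linear_Tmap: "linear (Tmap R)"
  by (rule linearI) (simp_all add: vec_eq_iff Tmap_nth)

lemma trace_Tmap_mult:
  assumes "sym R" "a \<in> AR R"
  shows "trace (Tmap R b ** a) = trace (b ** a)"
  unfolding trace_matrix_mult Tmap_nth
  using assms by (intro sum.cong) (auto simp: AR_iff sym_def)

lemma trace_mult_matunit: "trace (X ** matunit p q) = X$q$p"
proof -
  have "(\<Sum>j\<in>UNIV. X$i$j * matunit p q $ j $ i) = (if i = q then X$i$p else 0)" for i
  proof -
    have "(\<Sum>j\<in>UNIV. X$i$j * matunit p q $ j $ i) = (\<Sum>j\<in>UNIV. if j = p then (if i = q then X$i$j else 0) else 0)"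
      by (intro sum.cong) (auto simp: matunit_nth)
    then show ?thesis by simp
  qed
  then show ?thesis
    by (simp add: trace_matrix_mult)
qed

lemma matunit_eq_Pv: "matunit k k = Pv (axis k 1)"
  by (simp add: vec_eq_iff matunit_nth Pv_nth axis_def)

lemma psd_matunit: "psd (matunit k k)"
  unfolding matunit_eq_Pv by (rule psd_Pv)

text \<open>The indices are transposed so that \<psi> a = trace (dens R \<psi> ** a) on A(R).\<close>

definition dens :: "('n::finite \<times> 'n) set \<Rightarrow> (complex^'n^'n \<Rightarrow> complex) \<Rightarrow> complex^'n^'n" where
  "dens R \<psi> = (\<chi> i j. if (j,i) \<in> R then \<psi> (matunit j i) else 0)"

lemma dens_AR: "sym R \<Longrightarrow> dens R \<psi> \<in> AR R"
  unfolding AR_iff dens_def sym_def by auto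

lemma lin_on_zero: "lin_on (AR R) \<psi> \<Longrightarrow> \<psi> 0 = 0"
  using AR_zero[of R] unfolding lin_on_def by (metis add_0 add_cancel_right_right)

lemma lin_on_sum:
  assumes "lin_on (AR R) \<psi>" "finite F" "\<And>p. p \<in> F \<Longrightarrow> f p \<in> AR R"
  shows "\<psi> (\<Sum>p\<in>F. f p) = (\<Sum>p\<in>F. \<psi> (f p)) \<and> (\<Sum>p\<in>F. f p) \<in> AR R"
  using assms(2,3)
proof (induction F rule: finite_induct)
  case empty
  then show ?case
    using lin_on_zero[OF assms(1)] AR_zero by simp
next
  case (insert x F)
  then show ?case
    using assms(1) unfolding lin_on_def by (simp add: AR_add)
qed

lemma sum_pairs_eq_double_sum:
  "(\<Sum>p\<in>R. g (fst p) (snd p)) = (\<Sum>i\<in>UNIV. \<Sum>j\<in>UNIV. if (i,j) \<in> R then g i j else 0)"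
  for g :: "'n::finite \<Rightarrow> 'n \<Rightarrow> 'a::comm_monoid_add"
proof -
  have "(\<Sum>p\<in>R. g (fst p) (snd p)) = (\<Sum>p\<in>UNIV \<times> UNIV. if p \<in> R then g (fst p) (snd p) else 0)"
    by (simp add: sum.If_cases Int_absorb1 UNIV_Times_UNIV)
  then show ?thesis
    by (simp add: sum.cartesian_product case_prod_beta)
qed

lemma lin_on_eq_trace_dens:
  assumes l: "lin_on (AR R) \<psi>" and a: "a \<in> AR R"
  shows "\<psi> a = trace (dens R \<psi> ** a)"
proof -
  let ?e = "\<lambda>p. msmult (a $ fst p $ snd p) (matunit (fst p) (snd p))"
  have "(\<Sum>p\<in>R. ?e p) $ i $ j = a$i$j" for i j
  proof -
    have "(\<Sum>p\<in>R. ?e p) $ i $ j = (\<Sum>p\<in>R. if p = (i,j) then a$i$j else 0)"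
      unfolding sum_component by (rule sum.cong) (auto simp: msmult_def matunit_nth)
    then show ?thesis
      using a by (simp add: sum.delta' AR_iff)
  qed
  then have "a = (\<Sum>p\<in>R. ?e p)"
    by (simp add: vec_eq_iff)
  then have "\<psi> a = (\<Sum>p\<in>R. \<psi> (?e p))"
    using lin_on_sum[OF l, of R ?e] by (simp add: AR_msmult AR_matunit)
  also have "\<dots> = (\<Sum>p\<in>R. a $ fst p $ snd p * \<psi> (matunit (fst p) (snd p)))"
    using l by (intro sum.cong) (auto simp: lin_on_def AR_matunit)
  also have "\<dots> = (\<Sum>i\<in>UNIV. \<Sum>j\<in>UNIV. if (i,j) \<in> R then a$i$j * \<psi> (matunit i j) else 0)"
    by (rule sum_pairs_eq_double_sum)
  also have "\<dots> = (\<Sum>j\<in>UNIV. \<Sum>i\<in>UNIV. if (i,j) \<in> R then a$i$j * \<psi> (matunit i j) else 0)"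
    by (rule sum.swap)
  also have "\<dots> = trace (dens R \<psi> ** a)"
    unfolding trace_matrix_mult dens_def by (intro sum.cong) auto
  finally show ?thesis .
qed

lemma vanishing_outside_eqI:
  assumes "\<And>a. a \<notin> S \<Longrightarrow> f a = 0" "\<And>a. a \<notin> S \<Longrightarrow> g a = 0" "\<And>a. a \<in> S \<Longrightarrow> f a = g a"
  shows "f = g"
  using assms by (metis ext)

lemma state_of_nonneg: "state_of S \<psi> \<Longrightarrow> a \<in> S \<Longrightarrow> psd a \<Longrightarrow> 0 \<le> \<psi> a"
  unfolding state_of_def by blast

lemma state_of_outside: "state_of S \<psi> \<Longrightarrow> a \<notin> S \<Longrightarrow> \<psi> a = 0"
  unfolding state_of_def by blast

lemma state_of_trace_density:
  assumes "refl R" "psd \<rho>" "trace \<rho> = 1"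
  shows "state_of (AR R) (restr_to (AR R) (\<lambda>a. trace (\<rho> ** a)))"
proof -
  have "trace (\<rho> ** msmult c a) = c * trace (\<rho> ** a)" for c a
    by (simp add: trace_matrix_mult msmult_def sum_distrib_left mult_ac)
  moreover have "trace (\<rho> ** (a + b)) = trace (\<rho> ** a) + trace (\<rho> ** b)" for a b
    by (simp add: matrix_add_ldistrib trace_add)
  ultimately show ?thesis
    using assms AR_mat1[OF assms(1)] trace_mult_psd_nonneg[OF assms(2)]
    by (auto simp: state_of_def lin_on_def restr_to_def AR_add AR_msmult)
qed

lemma sesq_Tmap_square:
  "sesq (Tmap (B \<times> B) D) x x = sesq D (\<chi> k. if k \<in> B then x$k else 0) (\<chi> k. if k \<in> B then x$k else 0)"
  unfolding sesq_def Tmap_nth by (intro sum.cong) auto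

lemma psd_dens_block:
  assumes t: "tolerance R" and s: "state_of (AR R) \<psi>" and ij: "(i,j) \<in> R"
  shows "psd (Tmap ({i,j} \<times> {i,j}) (dens R \<psi>))"
  unfolding psd_iff_sesq sesq_Tmap_square
proof
  fix x :: "complex^_"
  let ?y = "x$i *s axis i 1 + (if i = j then 0 else x$j) *s axis j 1"
  have y: "(\<chi> k. if k \<in> {i,j} then x$k else 0) = ?y"
    by (auto simp: vec_eq_iff axis_def)
  have "Pv ?y \<in> AR R"
    by (rule Pv_AR_if_supported_on_edge[OF t ij]) (simp add: axis_def)
  moreover have "lin_on (AR R) \<psi>"
    using s by (simp add: state_of_def)
  ultimately have "\<psi> (Pv ?y) = sesq (dens R \<psi>) ?y ?y"
    using lin_on_eq_trace_dens by (metis trace_mul_sym trace_Pv_mult)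
  then show "0 \<le> sesq (dens R \<psi>) (\<chi> k. if k \<in> {i,j} then x$k else 0) (\<chi> k. if k \<in> {i,j} then x$k else 0)"
    unfolding y using state_of_nonneg[OF s \<open>Pv ?y \<in> AR R\<close> psd_Pv] by simp
qed

lemma dens_hermitian:
  assumes t: "tolerance R" and s: "state_of (AR R) \<psi>"
  shows "dens R \<psi> $ j $ i = cnj (dens R \<psi> $ i $ j)"
proof (cases "(j,i) \<in> R")
  case True
  then show ?thesis
    using psd_hermitian[OF psd_dens_block[OF t s True], of j i] by (simp add: Tmap_nth)
next
  case False
  then have "(i,j) \<notin> R"
    using t unfolding tolerance_def sym_def by blast
  then show ?thesis
    using False by (simp add: dens_def)
qed

subsection \<open>Extension of states to density matrices\<close>

definition density_matrices :: "(complex^'n::finite^'n) set" where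
  "density_matrices = {\<rho>. psd \<rho> \<and> trace \<rho> = 1}"

lemma trace_scaleR: "trace (c *\<^sub>R A) = of_real c * trace A"
  unfolding trace_def scaleR_matrix_nth by (simp add: sum_distrib_left)

lemma trace_scaleR_mult: "trace ((c *\<^sub>R X) ** a) = of_real c * trace (X ** a)"
  unfolding trace_matrix_mult scaleR_matrix_nth by (simp add: sum_distrib_left mult_ac)

lemma convex_density_matrices: "convex density_matrices"
  unfolding convex_def density_matrices_def
  by (auto intro!: psd_add psd_scaleR simp: trace_add trace_scaleR simp flip: of_real_add)

lemma closed_density_matrices: "closed density_matrices"
proof -
  have eq: "density_matrices = {\<rho>::complex^'n^'n. trace \<rho> = 1} \<inter>
     (\<Inter>x. {\<rho>. 0 \<le> Re (sesq \<rho> x x)} \<inter> {\<rho>. Im (sesq \<rho> x x) = 0})"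
    unfolding density_matrices_def psd_iff_sesq less_eq_complex_def by auto
  have "closed {\<rho>::complex^'n^'n. trace \<rho> = 1}"
    unfolding trace_def by (intro closed_Collect_eq continuous_intros)
  moreover have "closed ({\<rho>::complex^'n^'n. 0 \<le> Re (sesq \<rho> x x)} \<inter> {\<rho>. Im (sesq \<rho> x x) = 0})" for x
    unfolding sesq_def by (intro closed_Int closed_Collect_le closed_Collect_eq continuous_intros)
  ultimately show ?thesis
    unfolding eq by (intro closed_Int closed_INT) auto
qed

lemma density_matrix_entry_bound:
  assumes "\<rho> \<in> density_matrices"
  shows "cmod (\<rho>$i$j) \<le> 1"
proof -
  have p: "psd \<rho>" and tr: "trace \<rho> = 1"
    using assms by (auto simp: density_matrices_def)
  have d0: "0 \<le> Re (\<rho>$k$k)" for k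
    using psd_diag_nonneg[OF p, of k] by (simp add: less_eq_complex_def)
  have "Re (\<rho>$k$k) \<le> (\<Sum>l\<in>UNIV. Re (\<rho>$l$l))" for k
    using d0 by (intro member_le_sum) auto
  also have "(\<Sum>l\<in>UNIV. Re (\<rho>$l$l)) = 1"
    using arg_cong[OF tr, of Re] by (simp add: trace_def)
  finally have "Re (\<rho>$i$i) * Re (\<rho>$j$j) \<le> 1 * 1"
    using d0 by (intro mult_mono) auto
  then have "cmod (\<rho>$i$j) ^ 2 \<le> 1"
    using psd_entry_cauchy_schwarz[OF p, of i j] by simp
  then show ?thesis
    by (simp add: power_le_one_iff abs_le_square_iff)
qed

lemma norm_vec_le_sum: "norm (x::('a::real_normed_vector)^'n::finite) \<le> (\<Sum>i\<in>UNIV. norm (x$i))"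
  unfolding norm_vec_def by (rule L2_set_le_sum) simp

lemma compact_density_matrices: "compact (density_matrices :: (complex^'n::finite^'n) set)"
proof -
  have "norm \<rho> \<le> real CARD('n) * real CARD('n)" if "\<rho> \<in> density_matrices" for \<rho> :: "complex^'n^'n"
  proof -
    have "norm \<rho> \<le> (\<Sum>i\<in>UNIV. norm (\<rho>$i))"
      by (rule norm_vec_le_sum)
    also have "\<dots> \<le> (\<Sum>i\<in>UNIV. \<Sum>j\<in>UNIV. norm (\<rho>$i$j))"
      by (intro sum_mono norm_vec_le_sum)
    also have "\<dots> \<le> (\<Sum>i\<in>(UNIV::'n set). \<Sum>j\<in>(UNIV::'n set). 1)"
      using density_matrix_entry_bound[OF that] by (intro sum_mono) auto
    finally show ?thesis by simp
  qed
  then have "bounded (density_matrices :: (complex^'n^'n) set)"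
    unfolding bounded_iff by blast
  then show ?thesis
    using closed_density_matrices compact_eq_bounded_closed by blast
qed

text \<open>For Hermitian X, the real-linear functional X \<mapsto> inner a (Tmap R X) is X \<mapsto> trace (X ** dual_matrix R a)
  with dual_matrix R a \<in> A(R); this turns a separating hyperplane into an element of A(R).\<close>

definition dual_matrix :: "('n::finite \<times> 'n) set \<Rightarrow> complex^'n^'n \<Rightarrow> complex^'n^'n" where
  "dual_matrix R a = (\<chi> p q. if (q,p) \<in> R then (cnj (a$q$p) + a$p$q) / 2 else 0)"

lemma dual_matrix_AR: "sym R \<Longrightarrow> dual_matrix R a \<in> AR R"
  unfolding AR_iff dual_matrix_def sym_def by auto

lemma trace_mult_dual_matrix:
  assumes sR: "sym R" and X: "\<And>i j. X$j$i = cnj (X$i$j)"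
  shows "trace (X ** dual_matrix R a) = of_real (inner a (Tmap R X))"
proof -
  let ?S = "\<lambda>g. \<Sum>i\<in>UNIV. \<Sum>j\<in>UNIV. if (i,j) \<in> R then g i j else (0::complex)"
  have swap: "?S (\<lambda>i j. g j i) = ?S g" for g
  proof -
    have "?S (\<lambda>i j. g j i) = (\<Sum>j\<in>UNIV. \<Sum>i\<in>UNIV. if (i,j) \<in> R then g j i else 0)"
      by (rule sum.swap)
    also have "\<dots> = ?S g"
      using sR by (intro sum.cong refl) (auto simp: sym_def)
    finally show ?thesis .
  qed
  have "trace (X ** dual_matrix R a) = ?S (\<lambda>i j. X$i$j * cnj (a$i$j) / 2) + ?S (\<lambda>i j. X$i$j * a$j$i / 2)"
    unfolding trace_matrix_mult dual_matrix_def
    by (simp add: sum.distrib[symmetric] if_distrib algebra_simps add_divide_distrib cong: if_cong)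
  also have "?S (\<lambda>i j. X$i$j * a$j$i / 2) = ?S (\<lambda>i j. cnj (X$i$j) * a$i$j / 2)"
    unfolding swap[of "\<lambda>i j. X$i$j * a$j$i / 2", symmetric] X[symmetric] ..
  also have "?S (\<lambda>i j. X$i$j * cnj (a$i$j) / 2) + \<dots>
      = (\<Sum>i\<in>UNIV. \<Sum>j\<in>UNIV. of_real (if (i,j) \<in> R then inner (a$i$j) (X$i$j) else 0))"
    unfolding sum.distrib[symmetric]
    by (intro sum.cong refl) (simp add: complex_eq_iff inner_complex_def field_simps)
  also have "\<dots> = of_real (inner a (Tmap R X))"
    by (simp add: inner_vec_def Tmap_nth if_distrib[of "inner _"] cong: if_cong)
  finally show ?thesis .
qed

lemma psd_dual_matrix_shift:
  fixes R :: "('n::finite \<times> 'n) set"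
  assumes sR: "sym R" and sep: "\<And>\<rho>. \<rho> \<in> density_matrices \<Longrightarrow> b < inner a (Tmap R \<rho>)"
  shows "psd (dual_matrix R a + msmult (- of_real b) (mat 1))"
proof (rule psd_of_unit_vectors)
  fix y :: "complex^'n"
  assume "norm y = 1"
  then have lt: "b < inner a (Tmap R (Pv y))"
    using sep by (simp add: density_matrices_def psd_Pv trace_Pv)
  have "sesq (dual_matrix R a + msmult (- of_real b) (mat 1)) y y = trace (Pv y ** dual_matrix R a) - of_real b"
    using \<open>norm y = 1\<close> by (simp add: sesq_matrix_add sesq_msmult sesq_mat1 trace_Pv_mult)
  also have "trace (Pv y ** dual_matrix R a) = of_real (inner a (Tmap R (Pv y)))"
    by (rule trace_mult_dual_matrix[OF sR]) (simp add: Pv_nth)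
  finally show "0 \<le> sesq (dual_matrix R a + msmult (- of_real b) (mat 1)) y y"
    using lt by (simp add: less_eq_complex_def)
qed

text \<open>Every state of A(R) is the restriction of a state of M_n: otherwise its density would lie
  outside the compact convex image of the density matrices under Tmap R, and a separating
  hyperplane yields a positive element of A(R) on which the state is negative.\<close>

lemma dens_in_Tmap_density_matrices:
  fixes R :: "('n::finite \<times> 'n) set"
  assumes t: "tolerance R" and s: "state_of (AR R) \<psi>"
  shows "dens R \<psi> \<in> Tmap R ` density_matrices"
proof (rule ccontr)
  assume notin: "dens R \<psi> \<notin> Tmap R ` density_matrices"
  have sR: "sym R" and rR: "refl R"
    using t unfolding tolerance_def by auto
  have l: "lin_on (AR R) \<psi>" and one: "\<psi> (mat 1) = 1"
    using s unfolding state_of_def by auto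
  have "continuous_on density_matrices (Tmap R)"
    using linear_Tmap[of R] unfolding linear_conv_bounded_linear by (rule linear_continuous_on)
  then have "closed (Tmap R ` density_matrices)"
    by (intro compact_imp_closed compact_continuous_image compact_density_matrices)
  moreover have "convex (Tmap R ` density_matrices)"
    by (rule convex_linear_image[OF linear_Tmap convex_density_matrices])
  ultimately obtain a b where ab: "inner a (dens R \<psi>) < b" "\<And>x. x \<in> Tmap R ` density_matrices \<Longrightarrow> b < inner a x"
    using separating_hyperplane_closed_point[OF _ _ notin] by blast
  define c where "c = dual_matrix R a + msmult (- of_real b) (mat 1)"
  have "c \<in> AR R"
    unfolding c_def by (intro AR_add AR_msmult AR_mat1 dual_matrix_AR sR rR)
  moreover have "psd c"
    unfolding c_def using ab(2) by (intro psd_dual_matrix_shift[OF sR]) blast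
  moreover have "\<psi> c = of_real (inner a (dens R \<psi>) - b)"
  proof -
    have "\<psi> c = \<psi> (dual_matrix R a) + \<psi> (msmult (- of_real b) (mat 1))"
      using l dual_matrix_AR[OF sR] AR_msmult[OF AR_mat1[OF rR]] unfolding c_def lin_on_def by blast
    also have "\<psi> (msmult (- of_real b) (mat 1)) = - of_real b"
      using l AR_mat1[OF rR] one unfolding lin_on_def by simp
    also have "\<psi> (dual_matrix R a) = trace (dens R \<psi> ** dual_matrix R a)"
      by (rule lin_on_eq_trace_dens[OF l dual_matrix_AR[OF sR]])
    also have "\<dots> = of_real (inner a (Tmap R (dens R \<psi>)))"
      by (rule trace_mult_dual_matrix[OF sR dens_hermitian[OF t s]])
    also have "Tmap R (dens R \<psi>) = dens R \<psi>"
      by (simp add: Tmap_AR dens_AR sR)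
    finally show ?thesis by simp
  qed
  ultimately show False
    using ab(1) state_of_nonneg[OF s] by (force simp: less_eq_complex_def)
qed

lemma state_extends_to_density:
  fixes R :: "('n::finite \<times> 'n) set"
  assumes t: "tolerance R" and s: "state_of (AR R) \<psi>"
  obtains \<rho> where "psd \<rho>" "trace \<rho> = 1" "\<And>a. a \<in> AR R \<Longrightarrow> \<psi> a = trace (\<rho> ** a)"
proof -
  obtain \<rho> where \<rho>: "\<rho> \<in> density_matrices" "dens R \<psi> = Tmap R \<rho>"
    using dens_in_Tmap_density_matrices[OF t s] by blast
  have "sym R" and l: "lin_on (AR R) \<psi>"
    using t s by (simp_all add: tolerance_def state_of_def)
  show thesis
  proof (rule that)
    show "psd \<rho>" "trace \<rho> = 1"
      using \<rho>(1) by (simp_all add: density_matrices_def)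
    show "\<psi> a = trace (\<rho> ** a)" if "a \<in> AR R" for a
      using lin_on_eq_trace_dens[OF l that] trace_Tmap_mult[OF \<open>sym R\<close> that, of \<rho>] \<rho>(2) by simp
  qed
qed

subsection \<open>Vector states\<close>

definition vector_state :: "('n::finite \<times> 'n) set \<Rightarrow> complex^'n \<Rightarrow> (complex^'n^'n \<Rightarrow> complex)" where
  "vector_state R w = restr_to (AR R) (\<lambda>a. trace (Pv w ** a))"

lemma vector_state_in: "a \<in> AR R \<Longrightarrow> vector_state R w a = sesq a w w"
  by (simp add: vector_state_def restr_to_def trace_Pv_mult)

lemma vector_state_out: "a \<notin> AR R \<Longrightarrow> vector_state R w a = 0"
  by (simp add: vector_state_def restr_to_def)

lemma vector_state_matunit: "refl R \<Longrightarrow> vector_state R w (matunit k k) = w$k * cnj (w$k)"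
  by (simp add: vector_state_def restr_to_def AR_matunit refl_on_def trace_mult_matunit Pv_nth)

lemma vector_state_UNIV: "vector_state UNIV w = (\<lambda>a. trace (Pv w ** a))"
  by (simp add: vector_state_def AR_UNIV restr_to_def)

lemma restr_to_trace_Tmap_Pv:
  "sym R \<Longrightarrow> restr_to (AR R) (\<lambda>a. trace (Tmap R (Pv v) ** a)) = vector_state R v"
  unfolding vector_state_def restr_to_def by (auto simp: trace_Tmap_mult)

lemma state_vector_state: "refl R \<Longrightarrow> norm w = 1 \<Longrightarrow> state_of (AR R) (vector_state R w)"
  unfolding vector_state_def by (intro state_of_trace_density psd_Pv) (simp_all add: trace_Pv)

lemma pure_state_ofD:
  assumes "pure_state_of S \<phi>" "state_of S \<psi>1" "state_of S \<psi>2" "0 < t" "t < 1"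
    and "\<phi> = (\<lambda>a. of_real t * \<psi>1 a + of_real (1 - t) * \<psi>2 a)"
  shows "\<psi>1 = \<phi>"
  using assms unfolding pure_state_of_def by blast

lemma pure_state_ofI:
  assumes "state_of S \<phi>"
    and "\<And>\<psi>1 \<psi>2 t. state_of S \<psi>1 \<Longrightarrow> state_of S \<psi>2 \<Longrightarrow> 0 < t \<Longrightarrow> t < 1 \<Longrightarrow>
          \<phi> = (\<lambda>a. of_real t * \<psi>1 a + of_real (1 - t) * \<psi>2 a) \<Longrightarrow> \<psi>1 = \<phi>"
  shows "pure_state_of S \<phi>"
  unfolding pure_state_of_def
proof (intro conjI[OF assms(1)] allI impI)
  fix \<psi>1 \<psi>2 and t :: real
  assume h: "state_of S \<psi>1 \<and> state_of S \<psi>2 \<and> 0 < t \<and> t < 1 \<and>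
    \<phi> = (\<lambda>a. of_real t * \<psi>1 a + of_real (1 - t) * \<psi>2 a)"
  then have "\<phi> = (\<lambda>a. of_real (1 - t) * \<psi>2 a + of_real (1 - (1 - t)) * \<psi>1 a)"
    by (simp add: add.commute)
  then show "\<psi>1 = \<phi> \<and> \<psi>2 = \<phi>"
    using h assms(2)[of \<psi>1 \<psi>2 t] assms(2)[of \<psi>2 \<psi>1 "1 - t"] by simp
qed

lemma convex_comb_states_eq_0:
  assumes "state_of S \<psi>1" "state_of S \<psi>2" "0 < t" "t < 1"
    and "\<phi> = (\<lambda>a. of_real t * \<psi>1 a + of_real (1 - t) * \<psi>2 a)"
    and "a \<in> S" "psd a" "\<phi> a = 0"
  shows "\<psi>1 a = 0"
proof -
  have "0 \<le> \<psi>1 a" "0 \<le> \<psi>2 a"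
    using assms(1,2,6,7) by (auto intro: state_of_nonneg)
  moreover have "t * Re (\<psi>1 a) + (1 - t) * Re (\<psi>2 a) = 0"
    using arg_cong[OF assms(8), of Re] assms(5) by simp
  ultimately show ?thesis
    using assms(3,4) by (auto simp: less_eq_complex_def complex_eq_iff add_nonneg_eq_0_iff)
qed

definition orth_pair :: "complex^'n::finite \<Rightarrow> 'n \<Rightarrow> 'n \<Rightarrow> complex^'n" where
  "orth_pair v i j = cnj (v$j) *s axis i 1 - cnj (v$i) *s axis j 1"

lemma cinner_orth_pair: "cinner (orth_pair v i j) v = 0"
proof -
  have "cinner (orth_pair v i j) v
      = (\<Sum>k\<in>UNIV. (if k = i then v$j * v$k else 0) - (if k = j then v$i * v$k else 0))"
    unfolding cinner_def orth_pair_def by (intro sum.cong) (auto simp: axis_def)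
  then show ?thesis
    by (simp add: sum_subtractf mult.commute)
qed

lemma sesq_axis_orth_pair: "sesq \<rho> (axis k 1) (orth_pair v i j) = cnj (v$j) * \<rho>$k$i - cnj (v$i) * \<rho>$k$j"
  by (simp add: orth_pair_def sesq_diff_right sesq_scale_right sesq_axis)

lemma psd_null_orth_pair:
  assumes p: "psd \<rho>" and va: "v$a \<noteq> 0" and vb: "v$b \<noteq> 0"
    and z: "sesq \<rho> (orth_pair v a b) (orth_pair v a b) = 0"
  defines "c \<equiv> \<lambda>k. \<rho>$k$k / (v$k * cnj (v$k))"
  shows "\<rho>$a$b = c a * v$a * cnj (v$b)" and "c a = c b"
proof -
  have E1: "cnj (v$b) * \<rho>$a$a - cnj (v$a) * \<rho>$a$b = 0"
    using psd_sesq_null[OF p z, of "axis a 1"] by (simp only: sesq_axis_orth_pair)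
  have E2: "cnj (v$b) * \<rho>$b$a - cnj (v$a) * \<rho>$b$b = 0"
    using psd_sesq_null[OF p z, of "axis b 1"] by (simp only: sesq_axis_orth_pair)
  show ab: "\<rho>$a$b = c a * v$a * cnj (v$b)"
    using E1 va vb unfolding c_def by (simp add: field_simps)
  have "cnj (c a) = c a"
    unfolding c_def using psd_hermitian[OF p, of a a] by (simp add: mult.commute)
  moreover have "\<rho>$b$a = cnj (\<rho>$a$b)"
    by (rule psd_hermitian[OF p])
  ultimately have "\<rho>$b$a = c a * cnj (v$a) * v$b"
    using ab by simp
  moreover have "\<rho>$b$b = c b * (v$b * cnj (v$b))"
    unfolding c_def using vb by simp
  ultimately have "(c a - c b) * (cnj (v$a) * v$b * cnj (v$b)) = 0"
    using E2 by (simp add: algebra_simps)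
  then show "c a = c b"
    using va vb by simp
qed

lemma R_tolerant_constant_on_support:
  assumes tol: "R_tolerant R v"
    and edge: "\<And>a b. (a,b) \<in> R \<Longrightarrow> v$a \<noteq> 0 \<Longrightarrow> v$b \<noteq> 0 \<Longrightarrow> f a = f b"
    and "v$k \<noteq> 0" "v$l \<noteq> 0"
  shows "f k = f l"
proof -
  have "(k,l) \<in> (Rv R v)\<^sup>*"
    using tol assms(3,4) unfolding R_tolerant_def by blast
  then show ?thesis
  proof (induction rule: rtrancl_induct)
    case (step y z)
    then show ?case
      using edge by (auto simp: Rv_def)
  qed simp
qed

text \<open>Connectedness of R_v propagates the factor of psd_null_orth_pair over the support of v,
  and the trace fixes it to 1.\<close>

lemma density_eq_Pv_on_R:
  assumes nv: "norm v = 1" and tol: "R_tolerant R v" and p: "psd \<rho>" and tr: "trace \<rho> = 1"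
    and h0: "\<And>k. v$k = 0 \<Longrightarrow> \<rho>$k$k = 0"
    and hx: "\<And>i j. (i,j) \<in> R \<Longrightarrow> sesq \<rho> (orth_pair v i j) (orth_pair v i j) = 0"
    and ij: "(i,j) \<in> R"
  shows "\<rho>$i$j = v$i * cnj (v$j)"
proof -
  define c where "c k = \<rho>$k$k / (v$k * cnj (v$k))" for k
  note edge = psd_null_orth_pair[OF p _ _ hx, folded c_def]
  obtain k0 where k0: "v$k0 \<noteq> 0"
    using tol by (auto simp: R_tolerant_def vec_eq_iff)
  have const: "c k = c k0" if "v$k \<noteq> 0" for k
    using R_tolerant_constant_on_support[where f = c, OF tol _ that k0] edge(2) by blast
  have diag: "\<rho>$k$k = c k0 * (v$k * cnj (v$k))" for k
  proof (cases "v$k = 0")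
    case False
    then have "\<rho>$k$k = c k * (v$k * cnj (v$k))"
      by (simp add: c_def)
    then show ?thesis
      using const[OF False] by simp
  qed (simp add: h0)
  have "1 = (\<Sum>k\<in>UNIV. \<rho>$k$k)"
    using tr by (simp add: trace_def)
  also have "\<dots> = c k0 * trace (Pv v)"
    by (simp add: diag trace_def Pv_nth sum_distrib_left)
  finally have "c k0 = 1"
    using nv by (simp add: trace_Pv)
  show ?thesis
  proof (cases "v$i = 0 \<or> v$j = 0")
    case True
    then show ?thesis
      using h0 psd_offdiag_zero[OF p, of i j] by auto
  next
    case False
    then show ?thesis
      using edge(1)[OF _ _ ij] const[of i] \<open>c k0 = 1\<close> by simp
  qed
qed

lemma Tmap_eq_Tmap_Pv_if_annihilates:
  assumes t: "tolerance R" and nv: "norm v = 1" and tol: "R_tolerant R v"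
    and p: "psd \<rho>" and tr: "trace \<rho> = 1"
    and zero: "\<And>a. a \<in> AR R \<Longrightarrow> psd a \<Longrightarrow> vector_state R v a = 0 \<Longrightarrow> trace (\<rho> ** a) = 0"
  shows "Tmap R \<rho> = Tmap R (Pv v)"
proof -
  have rR: "refl R"
    using t by (simp add: tolerance_def)
  have "\<rho>$k$k = 0" if "v$k = 0" for k
  proof -
    have "matunit k k \<in> AR R"
      using rR by (simp add: AR_matunit refl_on_def)
    then show ?thesis
      using zero[OF _ psd_matunit] that by (simp add: vector_state_matunit[OF rR] trace_mult_matunit)
  qed
  moreover have "sesq \<rho> (orth_pair v i j) (orth_pair v i j) = 0" if ij: "(i,j) \<in> R" for i j
  proof -
    have "Pv (orth_pair v i j) \<in> AR R"
      by (rule Pv_AR_if_supported_on_edge[OF t ij]) (simp add: orth_pair_def axis_def)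
    then have "trace (\<rho> ** Pv (orth_pair v i j)) = 0"
      using zero[OF _ psd_Pv] by (simp add: vector_state_in sesq_Pv cinner_orth_pair)
    then show ?thesis
      by (simp add: trace_mul_sym[of \<rho>] trace_Pv_mult)
  qed
  ultimately show ?thesis
    using density_eq_Pv_on_R[OF nv tol p tr] by (simp add: vec_eq_iff Tmap_nth Pv_nth)
qed

lemma pure_vector_state_if_tolerant:
  assumes t: "tolerance R" and nv: "norm v = 1" and tol: "R_tolerant R v"
  shows "pure_state_of (AR R) (vector_state R v)"
proof -
  have rR: "refl R" and sR: "sym R"
    using t unfolding tolerance_def by auto
  show ?thesis
  proof (rule pure_state_ofI[OF state_vector_state[OF rR nv]])
    fix \<psi>1 \<psi>2 \<tau>
    assume s1: "state_of (AR R) \<psi>1" and s2: "state_of (AR R) \<psi>2" and \<tau>: "0 < \<tau>" "\<tau> < 1"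
      and dec: "vector_state R v = (\<lambda>a. of_real \<tau> * \<psi>1 a + of_real (1 - \<tau>) * \<psi>2 a)"
    obtain \<rho> where p: "psd \<rho>" and tr: "trace \<rho> = 1"
      and rep: "\<And>a. a \<in> AR R \<Longrightarrow> \<psi>1 a = trace (\<rho> ** a)"
      using state_extends_to_density[OF t s1] by blast
    have Tmap_eq: "Tmap R \<rho> = Tmap R (Pv v)"
      by (rule Tmap_eq_Tmap_Pv_if_annihilates[OF t nv tol p tr])
        (metis convex_comb_states_eq_0[OF s1 s2 \<tau> dec] rep)
    show "\<psi>1 = vector_state R v"
    proof (rule vanishing_outside_eqI[OF state_of_outside[OF s1] vector_state_out])
      fix a
      assume a: "a \<in> AR R"
      have "\<psi>1 a = trace (Tmap R \<rho> ** a)"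
        using rep[OF a] trace_Tmap_mult[OF sR a] by simp
      also have "\<dots> = trace (Pv v ** a)"
        unfolding Tmap_eq by (rule trace_Tmap_mult[OF sR a])
      finally show "\<psi>1 a = vector_state R v a"
        by (simp add: vector_state_def restr_to_def a)
    qed
  qed
qed

lemma sesq_AR_eq_0:
  assumes "a \<in> AR R" and "\<And>k l. x$k \<noteq> 0 \<Longrightarrow> y$l \<noteq> 0 \<Longrightarrow> (k,l) \<notin> R"
  shows "sesq a x y = 0"
  unfolding sesq_def using assms by (intro sum.neutral ballI) (auto simp: AR_iff)

lemma sesq_split_along_cut:
  assumes sR: "sym R" and a: "a \<in> AR R"
    and cut: "\<And>k l. k \<in> C \<Longrightarrow> l \<notin> C \<Longrightarrow> (k,l) \<in> R \<Longrightarrow> v$k * v$l = 0"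
  shows "sesq a v v = sesq a (\<chi> k. if k \<in> C then v$k else 0) (\<chi> k. if k \<in> C then v$k else 0)
    + sesq a (\<chi> k. if k \<in> C then 0 else v$k) (\<chi> k. if k \<in> C then 0 else v$k)"
proof -
  define v1 v2 where "v1 = (\<chi> k. if k \<in> C then v$k else 0)" and "v2 = (\<chi> k. if k \<in> C then 0 else v$k)"
  have "v = v1 + v2"
    by (simp add: v1_def v2_def vec_eq_iff)
  moreover have "sesq a v1 v2 = 0"
  proof (rule sesq_AR_eq_0[OF a])
    fix k l
    assume "v1$k \<noteq> 0" "v2$l \<noteq> 0"
    then show "(k,l) \<notin> R"
      using cut[of k l] by (auto simp: v1_def v2_def split: if_splits)
  qed
  moreover have "sesq a v2 v1 = 0"
  proof (rule sesq_AR_eq_0[OF a])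
    fix k l
    assume "v2$k \<noteq> 0" "v1$l \<noteq> 0"
    then show "(k,l) \<notin> R"
      using cut[of l k] sR by (auto simp: v1_def v2_def sym_def split: if_splits)
  qed
  ultimately show ?thesis
    unfolding v1_def[symmetric] v2_def[symmetric] by (simp add: sesq_add_left sesq_add_right)
qed

lemma vector_state_split_along_cut:
  assumes rR: "refl R" and sR: "sym R" and nv: "norm v = 1"
    and cut: "\<And>k l. k \<in> C \<Longrightarrow> l \<notin> C \<Longrightarrow> (k,l) \<in> R \<Longrightarrow> v$k * v$l = 0"
    and i: "i \<in> C" "v$i \<noteq> 0" and j: "j \<notin> C" "v$j \<noteq> 0"
  obtains u1 u2 t where "norm u1 = 1" "norm u2 = 1" "0 < t" "t < 1" "u1$j = 0"
    "vector_state R v = (\<lambda>a. of_real t * vector_state R u1 a + of_real (1 - t) * vector_state R u2 a)"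
proof -
  define v1 v2 where "v1 = (\<chi> k. if k \<in> C then v$k else 0)" and "v2 = (\<chi> k. if k \<in> C then 0 else v$k)"
  note split = sesq_split_along_cut[where C = C, OF sR _ cut, folded v1_def v2_def]
  have "v1$i = v$i" "v2$j = v$j" "v1$j = 0"
    using i j by (auto simp: v1_def v2_def)
  then have "v1 \<noteq> 0" "v2 \<noteq> 0"
    using i j by auto
  then obtain u1 u2 where u1: "norm u1 = 1" "v1 = of_real (norm v1) *s u1"
      "\<And>a. sesq a v1 v1 = of_real (norm v1 ^ 2) * sesq a u1 u1"
    and u2: "norm u2 = 1" "\<And>a. sesq a v2 v2 = of_real (norm v2 ^ 2) * sesq a u2 u2"
    by (metis sesq_normalize)
  have "of_real (norm v1 ^ 2 + norm v2 ^ 2) = (of_real 1 :: complex)"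
    using split[OF AR_mat1[OF rR]] nv by (simp add: sesq_mat1)
  then have n12: "norm v2 ^ 2 = 1 - norm v1 ^ 2"
    by (simp only: of_real_eq_iff)
  have dec: "vector_state R v = (\<lambda>a. of_real (norm v1 ^ 2) * vector_state R u1 a
      + of_real (1 - norm v1 ^ 2) * vector_state R u2 a)"
  proof
    fix a
    show "vector_state R v a = of_real (norm v1 ^ 2) * vector_state R u1 a
      + of_real (1 - norm v1 ^ 2) * vector_state R u2 a"
      using split[of a] u1(3)[of a] u2(2)[of a] n12
      by (cases "a \<in> AR R") (simp_all add: vector_state_in vector_state_out)
  qed
  have "of_real (norm v1) * u1$j = 0"
    using u1(2) \<open>v1$j = 0\<close> by (metis vector_smult_component)
  then have "u1$j = 0"
    using \<open>v1 \<noteq> 0\<close> by simp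
  moreover have "0 < norm v1 ^ 2" "0 < norm v2 ^ 2"
    using \<open>v1 \<noteq> 0\<close> \<open>v2 \<noteq> 0\<close> by simp_all
  ultimately show thesis
    using that[OF u1(1) u2(1) _ _ _ dec] n12 by simp
qed

lemma tolerant_if_pure_vector_state:
  assumes t: "tolerance R" and nv: "norm v = 1" and pure: "pure_state_of (AR R) (vector_state R v)"
  shows "R_tolerant R v"
proof (rule ccontr)
  assume "\<not> R_tolerant R v"
  moreover have "v \<noteq> 0"
    using nv by auto
  ultimately obtain i j where vi: "v$i \<noteq> 0" and vj: "v$j \<noteq> 0" and nij: "(i,j) \<notin> (Rv R v)\<^sup>*"
    unfolding R_tolerant_def by blast
  have rR: "refl R" and sR: "sym R"
    using t unfolding tolerance_def by auto
  define C where "C = {k. (i,k) \<in> (Rv R v)\<^sup>*}"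
  have cut: "v$k * v$l = 0" if "k \<in> C" "l \<notin> C" "(k,l) \<in> R" for k l
    using that rtrancl_into_rtrancl[of i k "Rv R v" l] unfolding C_def Rv_def by auto
  have "i \<in> C" "j \<notin> C"
    using nij by (auto simp: C_def)
  then obtain u1 u2 \<tau> where u: "norm u1 = 1" "norm u2 = 1" "0 < \<tau>" "\<tau> < 1" "u1$j = 0"
    and dec: "vector_state R v = (\<lambda>a. of_real \<tau> * vector_state R u1 a + of_real (1 - \<tau>) * vector_state R u2 a)"
    using vector_state_split_along_cut[OF rR sR nv cut _ vi _ vj] by blast
  then have "vector_state R u1 = vector_state R v"
    using pure_state_ofD[OF pure state_vector_state[OF rR] state_vector_state[OF rR]] by blast
  then show False
    using vj \<open>u1$j = 0\<close> vector_state_matunit[OF rR, of u1 j] vector_state_matunit[OF rR, of v j] by simp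
qed

lemma density_split_off_Pv:
  assumes p: "psd \<rho>" and tr: "trace \<rho> = 1"
  obtains u n \<rho>' where "norm u = 1" "0 < n" "n \<le> 1" "psd \<rho>'" "trace \<rho>' = of_real (1 - n)"
    "\<And>a. trace (\<rho> ** a) = of_real n * sesq a u u + trace (\<rho>' ** a)"
proof -
  obtain us where us: "\<rho> = sum_list (map Pv us)" and nz: "\<forall>u\<in>set us. u \<noteq> 0"
    using psd_eq_sum_Pv[OF p] by blast
  obtain u0 rest where ur: "us = u0 # rest"
    using tr us by (cases us) (auto simp: trace_def)
  define \<rho>' where "\<rho>' = sum_list (map Pv rest)"
  define n where "n = norm u0 ^ 2"
  have p': "psd \<rho>'"
    unfolding \<rho>'_def by (rule psd_sum_list) (rule psd_Pv)
  have tr': "trace \<rho>' = of_real (1 - n)"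
    using tr unfolding us ur \<rho>'_def n_def by (simp add: trace_add trace_Pv algebra_simps)
  have "n \<le> 1"
    using trace_mult_psd_nonneg[OF p' psd_mat1] tr' by (simp add: less_eq_complex_def)
  obtain u where "norm u = 1" and su: "\<And>a. sesq a u0 u0 = of_real n * sesq a u u"
    using sesq_normalize nz ur unfolding n_def by (metis list.set_intros(1))
  moreover have "trace (\<rho> ** a) = of_real n * sesq a u u + trace (\<rho>' ** a)" for a
    unfolding us ur \<rho>'_def by (simp add: trace_add_mult trace_Pv_mult su)
  moreover have "0 < n"
    using nz ur unfolding n_def by simp
  ultimately show thesis
    using that p' tr' \<open>n \<le> 1\<close> by blast
qed

lemma state_split_off_vector_state:
  assumes rR: "refl R" and s: "state_of (AR R) \<phi>" and n: "0 < n" "n < 1"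
    and p': "psd \<rho>'" and tr': "trace \<rho>' = of_real (1 - n)"
    and \<phi>: "\<And>a. a \<in> AR R \<Longrightarrow> \<phi> a = of_real n * vector_state R u a + trace (\<rho>' ** a)"
  obtains \<psi> where "state_of (AR R) \<psi>" "\<phi> = (\<lambda>a. of_real n * vector_state R u a + of_real (1 - n) * \<psi> a)"
proof -
  define \<psi> where "\<psi> = restr_to (AR R) (\<lambda>a. trace ((1 / (1 - n)) *\<^sub>R \<rho>' ** a))"
  have "state_of (AR R) \<psi>"
    unfolding \<psi>_def using p' tr' n
    by (intro state_of_trace_density rR psd_scaleR) (simp_all add: trace_scaleR)
  moreover have "\<phi> = (\<lambda>a. of_real n * vector_state R u a + of_real (1 - n) * \<psi> a)"
  proof (rule vanishing_outside_eqI[OF state_of_outside[OF s]])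
    show "of_real n * vector_state R u a + of_real (1 - n) * \<psi> a = 0" if "a \<notin> AR R" for a
      using that by (simp add: \<psi>_def restr_to_def vector_state_out)
    show "\<phi> a = of_real n * vector_state R u a + of_real (1 - n) * \<psi> a" if "a \<in> AR R" for a
      using that \<phi>[OF that] n by (simp add: \<psi>_def restr_to_def trace_scaleR_mult)
  qed
  ultimately show thesis
    using that by blast
qed

lemma pure_state_is_vector_state:
  assumes t: "tolerance R" and pure: "pure_state_of (AR R) \<phi>"
  obtains u where "norm u = 1" "\<phi> = vector_state R u"
proof -
  have rR: "refl R"
    using t unfolding tolerance_def by auto
  have s: "state_of (AR R) \<phi>"
    using pure unfolding pure_state_of_def by blast
  obtain \<rho> where p: "psd \<rho>" and tr: "trace \<rho> = 1" and rep: "\<And>a. a \<in> AR R \<Longrightarrow> \<phi> a = trace (\<rho> ** a)"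
    using state_extends_to_density[OF t s] by blast
  obtain u n \<rho>' where nu: "norm u = 1" and n: "0 < n" "n \<le> 1" and p': "psd \<rho>'"
    and tr': "trace \<rho>' = of_real (1 - n)" and \<rho>: "\<And>a. trace (\<rho> ** a) = of_real n * sesq a u u + trace (\<rho>' ** a)"
    using density_split_off_Pv[OF p tr] by blast
  have \<phi>: "\<phi> a = of_real n * vector_state R u a + trace (\<rho>' ** a)" if "a \<in> AR R" for a
    using rep[OF that] \<rho>[of a] by (simp add: vector_state_in[OF that])
  show thesis
  proof (cases "n = 1")
    case True
    then have "\<rho>' = 0"
      using psd_trace_zero[OF p'] tr' by simp
    have "\<phi> = vector_state R u"
    proof (rule vanishing_outside_eqI[OF state_of_outside[OF s] vector_state_out])
      show "\<phi> a = vector_state R u a" if "a \<in> AR R" for a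
        using \<phi>[OF that] True \<open>\<rho>' = 0\<close> by (simp add: trace_def matrix_matrix_mult_def)
    qed
    then show thesis
      using that nu by blast
  next
    case False
    then have "n < 1"
      using n by simp
    then obtain \<psi>2 where s2: "state_of (AR R) \<psi>2"
      and "\<phi> = (\<lambda>a. of_real n * vector_state R u a + of_real (1 - n) * \<psi>2 a)"
      using state_split_off_vector_state[OF rR s n(1) _ p' tr' \<phi>] by blast
    then have "vector_state R u = \<phi>"
      using pure_state_ofD[OF pure state_vector_state[OF rR nu] s2] n \<open>n < 1\<close> by blast
    then show thesis
      using that nu by blast
  qed
qed

text \<open>On the support of a tolerant w1 the quotient w2 / w1 is constant along the edges of R,
  hence a global phase.\<close>

lemma Pv_eq_if_agree_on_R:
  assumes rR: "refl R" and tol: "R_tolerant R w1"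
    and eq: "\<And>i j. (i,j) \<in> R \<Longrightarrow> w2$i * cnj (w2$j) = w1$i * cnj (w1$j)"
  shows "Pv w2 = Pv w1"
proof -
  have diag: "w2$k * cnj (w2$k) = w1$k * cnj (w1$k)" for k
    using eq[of k k] rR by (simp add: refl_on_def)
  define f where "f k = w2$k / w1$k" for k
  have edge: "f a = f b" if "(a,b) \<in> R" "w1$a \<noteq> 0" "w1$b \<noteq> 0" for a b
  proof -
    have "w2$a * (w2$b * cnj (w2$b)) = w1$a * cnj (w1$b) * w2$b"
      using eq[OF that(1)] by (metis mult.assoc mult.commute)
    then have "(w2$a * w1$b) * cnj (w1$b) = (w1$a * w2$b) * cnj (w1$b)"
      by (simp add: diag mult_ac)
    then show ?thesis
      using that(2,3) by (simp add: f_def field_simps)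
  qed
  obtain k0 where k0: "w1$k0 \<noteq> 0"
    using tol by (auto simp: R_tolerant_def vec_eq_iff)
  have "w2$k = f k0 * w1$k" for k
  proof (cases "w1$k = 0")
    case True
    then show ?thesis
      using diag[of k] by simp
  next
    case False
    then show ?thesis
      using R_tolerant_constant_on_support[where f = f, OF tol edge False k0] k0
      by (simp add: f_def field_simps)
  qed
  moreover have "f k0 * cnj (f k0) = 1"
    unfolding f_def using diag[of k0] k0 by (simp add: field_simps)
  ultimately show ?thesis
    by (simp add: vec_eq_iff Pv_nth mult_ac)
qed

lemma R_tolerant_pure_state_iff:
  "R_tolerant_pure_state R \<phi> \<longleftrightarrow> (\<exists>w. norm w = 1 \<and> R_tolerant R w \<and> \<phi> = (\<lambda>a. trace (Pv w ** a)))"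
proof -
  have "pure_state_of UNIV (\<lambda>a. trace (Pv w ** a))" if "norm w = 1" for w :: "complex^'a"
  proof -
    have "R_tolerant UNIV w"
      using that by (auto simp: R_tolerant_def Rv_def)
    then show ?thesis
      using pure_vector_state_if_tolerant[of UNIV w] that
      by (simp add: tolerance_def sym_def vector_state_UNIV AR_UNIV)
  qed
  then show ?thesis
    unfolding R_tolerant_pure_state_def by fast
qed

lemma inj_on_restr_to_R_tolerant_pure_states:
  assumes "refl R"
  shows "inj_on (restr_to (AR R)) {\<phi>. R_tolerant_pure_state R \<phi>}"
proof (rule inj_onI)
  fix \<phi>1 \<phi>2
  assume "\<phi>1 \<in> {\<phi>. R_tolerant_pure_state R \<phi>}" "\<phi>2 \<in> {\<phi>. R_tolerant_pure_state R \<phi>}"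
    and eq: "restr_to (AR R) \<phi>1 = restr_to (AR R) \<phi>2"
  then obtain w1 w2 where w1: "R_tolerant R w1" "\<phi>1 = (\<lambda>a. trace (Pv w1 ** a))"
    and w2: "\<phi>2 = (\<lambda>a. trace (Pv w2 ** a))"
    by (auto simp: R_tolerant_pure_state_iff)
  have "w2$i * cnj (w2$j) = w1$i * cnj (w1$j)" if "(i,j) \<in> R" for i j
  proof -
    have "w1$j * cnj (w1$i) = w2$j * cnj (w2$i)"
      using fun_cong[OF eq, of "matunit i j"] AR_matunit[OF that]
      by (simp add: w1 w2 restr_to_def trace_mult_matunit Pv_nth)
    then have "cnj (w1$j * cnj (w1$i)) = cnj (w2$j * cnj (w2$i))"
      by simp
    then show ?thesis
      by (simp add: mult.commute)
  qed
  then have "Pv w2 = Pv w1"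
    by (rule Pv_eq_if_agree_on_R[OF assms w1(1)])
  then show "\<phi>1 = \<phi>2"
    by (simp add: w1 w2)
qed

lemma image_restr_to_R_tolerant_pure_states:
  assumes t: "tolerance R"
  shows "restr_to (AR R) ` {\<phi>. R_tolerant_pure_state R \<phi>} = {\<phi>. pure_state_of (AR R) \<phi>}"
proof
  show "restr_to (AR R) ` {\<phi>. R_tolerant_pure_state R \<phi>} \<subseteq> {\<phi>. pure_state_of (AR R) \<phi>}"
    using pure_vector_state_if_tolerant[OF t]
    by (auto simp: R_tolerant_pure_state_iff simp flip: vector_state_def)
  show "{\<phi>. pure_state_of (AR R) \<phi>} \<subseteq> restr_to (AR R) ` {\<phi>. R_tolerant_pure_state R \<phi>}"
  proof
    fix \<phi>
    assume "\<phi> \<in> {\<phi>. pure_state_of (AR R) \<phi>}"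
    moreover obtain w where w: "norm w = 1" "\<phi> = vector_state R w"
      using pure_state_is_vector_state[OF t] calculation by blast
    ultimately have "R_tolerant R w"
      using tolerant_if_pure_vector_state[OF t] by simp
    then show "\<phi> \<in> restr_to (AR R) ` {\<phi>. R_tolerant_pure_state R \<phi>}"
      using w by (intro image_eqI[of _ _ "\<lambda>a. trace (Pv w ** a)"])
        (auto simp: R_tolerant_pure_state_iff vector_state_def)
  qed
qed

theorem proposition4p11:
  fixes R :: "('n::finite \<times> 'n) set" and v :: "complex^'n"
  assumes "tolerance R" and "norm v = 1"
  shows "(pure_state_of (AR R) (restr_to (AR R) (\<lambda>a. trace (Tmap R (Pv v) ** a)))
            \<longleftrightarrow> R_tolerant R v)
       \<and> bij_betw (restr_to (AR R)) {\<phi>. R_tolerant_pure_state R \<phi>} {\<phi>. pure_state_of (AR R) \<phi>}"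
proof
  have "refl R" "sym R"
    using assms(1) unfolding tolerance_def by auto
  show "pure_state_of (AR R) (restr_to (AR R) (\<lambda>a. trace (Tmap R (Pv v) ** a))) \<longleftrightarrow> R_tolerant R v"
    unfolding restr_to_trace_Tmap_Pv[OF \<open>sym R\<close>]
    using pure_vector_state_if_tolerant[OF assms] tolerant_if_pure_vector_state[OF assms] by blast
  show "bij_betw (restr_to (AR R)) {\<phi>. R_tolerant_pure_state R \<phi>} {\<phi>. pure_state_of (AR R) \<phi>}"
    unfolding bij_betw_def
    using inj_on_restr_to_R_tolerant_pure_states[OF \<open>refl R\<close>]
      image_restr_to_R_tolerant_pure_states[OF assms(1)] by blast
qed

end
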